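(* Let $n\ge 1$ and $k\ge 1$ be integers and let $\beta\in\mathbb{C}$. Then $$G_{(k)}(\underbrace{1,1,\dots,1}_{n}\mid \beta)=\binom{n+k-1}{k}\,{}_2F_1\!\left(\begin{matrix}k,\;1-n\\ k+1\end{matrix};-\beta\right).$$
   Context: Let $[n]=\{1,\dots,n\}$. For a partition $\lambda=(\lambda_1\ge\lambda_2\ge\cdots)$ with at most $n$ nonzero parts, identified with its Young diagram $\{(i,j): 1\le j\le\lambda_i\}$ (row index $i$ increasing downward, column index $j$ increasing to the right), a set-valued tableau of shape $\lambda$ with entries in $[n]$ assigns to every box $(i,j)$ a nonempty subset $T_{i,j}\subseteq[n]$ such that $\max T_{i,j}\le\min T_{i,j+1}$ and $\max T_{i,j}<\min T_{i+1,j}$ whenever these boxes exist. Let $\mathrm{SVT}(\lambda,n)$ be the set of these tableaux. For $T\in\mathrm{SVT}(\lambda,n)$, $|T|=\sum_{(i,j)}|T_{i,j}|$, $\omega_m(T)$ is the number of boxes whose set contains $m$, and $x^{\omega(T)}=\prod_{m=1}^n x_m^{\omega_m(T)}$. The (stable) Grothendieck polynomial is $G_\lambda(x_1,\dots,x_n\mid\beta)=\sum_{T\in\mathrm{SVT}(\lambda,n)}\beta^{|T|-|\lambda|}x^{\omega(T)}$, where $|\lambda|=\sum_i\lambda_i$. $(a)_0=1$, $(a)_m=a(a+1)\cdots(a+m-1)$. ${}_2F_1\!\left(\begin{smallmatrix}a,\,b\\ c\end{smallmatrix};z\right)=\sum_{m\ge0}\frac{(a)_m(b)_m}{(c)_m}\frac{z^m}{m!}$;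 when $b$ is a nonpositive integer this is a finite sum (a polynomial in $z$), which is the case here. *)

theory Defs
  imports Complex_Main
begin

text \<open>Partitions are lists of positive parts, weakly decreasing.
  Boxes use 1-based row index i and column index j, as in the paper.\<close>

definition is_partition :: "nat list \<Rightarrow> bool" where
  "is_partition lam \<longleftrightarrow> sorted_wrt (\<ge>) lam \<and> (\<forall>p\<in>set lam. p > 0)"

definition boxes :: "nat list \<Rightarrow> (nat \<times> nat) set" where
  "boxes lam = {(i, j). 1 \<le> i \<and> i \<le> length lam \<and> 1 \<le> j \<and> j \<le> lam ! (i - 1)}"

definition psize :: "nat list \<Rightarrow> nat" where
  "psize lam = sum_list lam"

definition SVT :: "nat list \<Rightarrow> nat \<Rightarrow> (nat \<times> nat \<Rightarrow> nat set) set" where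
  "SVT lam n = {T.
      (\<forall>b. b \<notin> boxes lam \<longrightarrow> T b = {}) \<and>
      (\<forall>b\<in>boxes lam. T b \<noteq> {} \<and> T b \<subseteq> {1..n}) \<and>
      (\<forall>i j. (i, j) \<in> boxes lam \<and> (i, j + 1) \<in> boxes lam
              \<longrightarrow> Max (T (i, j)) \<le> Min (T (i, j + 1))) \<and>
      (\<forall>i j. (i, j) \<in> boxes lam \<and> (i + 1, j) \<in> boxes lam
              \<longrightarrow> Max (T (i, j)) < Min (T (i + 1, j)))}"

definition tsize :: "nat list \<Rightarrow> (nat \<times> nat \<Rightarrow> nat set) \<Rightarrow> nat" where
  "tsize lam T = (\<Sum>b\<in>boxes lam. card (T b))"

definition weight :: "nat list \<Rightarrow> (nat \<times> nat \<Rightarrow> nat set) \<Rightarrow> nat \<Rightarrow> nat" where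
  "weight lam T m = card {b \<in> boxes lam. m \<in> T b}"

definition groth :: "nat list \<Rightarrow> nat \<Rightarrow> (nat \<Rightarrow> complex) \<Rightarrow> complex \<Rightarrow> complex" where
  "groth lam n x beta =
     (\<Sum>T\<in>SVT lam n. beta ^ (tsize lam T - psize lam) * (\<Prod>m=1..n. x m ^ weight lam T m))"

definition hyp2F1 :: "complex \<Rightarrow> complex \<Rightarrow> complex \<Rightarrow> complex \<Rightarrow> complex" where
  "hyp2F1 a b c z =
     (\<Sum>m. pochhammer a m * pochhammer b m / pochhammer c m * z ^ m / of_nat (fact m))"

end

theory Submission
  imports Defs
begin

text \<open>Read a one-row set-valued tableau from right to left, so that the box that may hold
  the largest entry \<open>n\<close> comes first. That box either equals \<open>{n}\<close>, or avoids \<open>n\<close> (and then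
  the whole row does), or contains \<open>n\<close> together with smaller entries (and dropping \<open>n\<close> costs
  one factor \<open>\<beta>\<close>). Hence G_(k)(1^n) = G_(k-1)(1^n) + (1 + \<beta>) G_(k)(1^(n-1)).
  The polynomial \<open>\<Sum>\<^sub>m C(n+k-1, k+m) C(k+m-1, m) \<beta>^m\<close> obeys the same recursion and
  boundary values. Since \<open>(k)\<^sub>m / (k+1)\<^sub>m = k / (k+m)\<close> and \<open>(1-n)\<^sub>m = (-1)^m m! C(n-1, m)\<close>,
  multiplying the terminating series \<open>\<^sub>2F\<^sub>1(k, 1-n; k+1; -\<beta>)\<close> by \<open>C(n+k-1, k)\<close> gives
  exactly this polynomial.\<close>

text \<open>The entries of a one-row tableau with entries in \<open>[n]\<close>, listed from right to left.\<close>

fun row_chain :: "nat \<Rightarrow> nat set list \<Rightarrow> bool" where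
  "row_chain n [] \<longleftrightarrow> True"
| "row_chain n (S # L) \<longleftrightarrow>
     S \<noteq> {} \<and> S \<subseteq> {1..n} \<and> row_chain n L \<and> (L \<noteq> [] \<longrightarrow> Max (hd L) \<le> Min S)"

definition row_chains :: "nat \<Rightarrow> nat \<Rightarrow> nat set list set" where
  "row_chains k n = {L. length L = k \<and> row_chain n L}"

definition row_size :: "nat set list \<Rightarrow> nat" where
  "row_size L = sum_list (map card L)"

definition row_gen :: "'a::comm_semiring_1 \<Rightarrow> nat \<Rightarrow> nat \<Rightarrow> 'a" where
  "row_gen b k n = (\<Sum>L\<in>row_chains k n. b ^ (row_size L - k))"

lemma row_chain_entry: "row_chain n L \<Longrightarrow> S \<in> set L \<Longrightarrow> S \<noteq> {} \<and> S \<subseteq> {1..n}"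
  by (induction L) auto

lemma row_chain_iff_nth:
  "row_chain n L \<longleftrightarrow> (\<forall>S\<in>set L. S \<noteq> {} \<and> S \<subseteq> {1..n}) \<and>
     (\<forall>i. Suc i < length L \<longrightarrow> Max (L ! Suc i) \<le> Min (L ! i))"
proof (induction L)
  case (Cons S L)
  have "(\<forall>i. Suc i < length (S # L) \<longrightarrow> Max ((S # L) ! Suc i) \<le> Min ((S # L) ! i)) \<longleftrightarrow>
        (L \<noteq> [] \<longrightarrow> Max (hd L) \<le> Min S) \<and> (\<forall>i. Suc i < length L \<longrightarrow> Max (L ! Suc i) \<le> Min (L ! i))"
    by (cases L) (auto simp: less_Suc_eq_0_disj)
  with Cons.IH show ?case by auto
qed simp

lemma finite_row_chains: "finite (row_chains k n)"
proof (rule finite_subset)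
  show "row_chains k n \<subseteq> {L. set L \<subseteq> Pow {1..n} \<and> length L = k}"
    using row_chain_entry unfolding row_chains_def by blast
  show "finite {L. set L \<subseteq> Pow {1..n} \<and> length L = k}"
    by (rule finite_lists_length_eq) simp
qed

lemma length_le_row_size: "row_chain n L \<Longrightarrow> length L \<le> row_size L"
proof (induction L)
  case (Cons S L)
  then have "card S > 0"
    using finite_subset[of S "{1..n}"] by (auto simp: card_gt_0_iff)
  with Cons show ?case by (simp add: row_size_def)
qed (simp add: row_size_def)

lemma row_chain_mono: "row_chain n L \<Longrightarrow> n \<le> m \<Longrightarrow> row_chain m L"
  by (induction L) auto

lemma row_chain_restrict:
  "row_chain m (S # L) \<Longrightarrow> S \<subseteq> {1..n} \<Longrightarrow> row_chain n (S # L)"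
proof (induction L arbitrary: S)
  case (Cons T L)
  then have T: "T \<noteq> {}" "T \<subseteq> {1..m}" "Max T \<le> Min S" and S: "S \<noteq> {}"
    by auto
  have "Min S \<le> n"
    using S Cons.prems(2) finite_subset[of S "{1..n}"] Min_in by fastforce
  moreover have "x \<le> Max T" if "x \<in> T" for x
    using that T finite_subset[of T "{1..m}"] by simp
  ultimately have "T \<subseteq> {1..n}"
    using T by fastforce
  with Cons.IH[of T] Cons.prems have "row_chain n (T # L)"
    by simp
  with Cons.prems show ?case by simp
qed simp

subsection \<open>One-row set-valued tableaux as chains of sets\<close>

definition row_tableau :: "nat \<Rightarrow> nat set list \<Rightarrow> nat \<times> nat \<Rightarrow> nat set" where
  "row_tableau k L = (\<lambda>(i, j). if i = 1 \<and> 1 \<le> j \<and> j \<le> k then L ! (k - j) else {})"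

lemma mem_boxes_single_row: "(i, j) \<in> boxes [k] \<longleftrightarrow> i = 1 \<and> 1 \<le> j \<and> j \<le> k"
  by (auto simp: boxes_def)

lemma row_tableau_in_SVT:
  assumes "L \<in> row_chains k n"
  shows "row_tableau k L \<in> SVT [k] n"
proof -
  have len: "length L = k"
    and entries: "\<forall>S\<in>set L. S \<noteq> {} \<and> S \<subseteq> {1..n}"
    and chain: "\<forall>i. Suc i < length L \<longrightarrow> Max (L ! Suc i) \<le> Min (L ! i)"
    using assms by (auto simp: row_chains_def row_chain_iff_nth)
  have entry: "row_tableau k L b \<noteq> {} \<and> row_tableau k L b \<subseteq> {1..n}"
    if b: "b \<in> boxes [k]" for b
  proof -
    obtain j where "b = (1, j)" "1 \<le> j" "j \<le> k"
      using b by (cases b) (auto simp: mem_boxes_single_row)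
    moreover from this have "L ! (k - j) \<in> set L"
      using len by simp
    ultimately show ?thesis
      using entries by (simp add: row_tableau_def)
  qed
  have "Max (L ! (k - j)) \<le> Min (L ! (k - (j + 1)))" if "1 \<le> j" "j + 1 \<le> k" for j
    using chain[rule_format, of "k - (j + 1)"] that len by (simp add: Suc_diff_Suc)
  with entry show ?thesis
    unfolding SVT_def by (auto simp: row_tableau_def mem_boxes_single_row)
qed

lemma SVT_single_row: "SVT [k] n = row_tableau k ` row_chains k n"
proof (intro equalityI subsetI)
  fix T assume T: "T \<in> SVT [k] n"
  define L where "L = map (\<lambda>i. T (1, k - i)) [0..<k]"
  have nth_L: "L ! i = T (1, k - i)" if "i < k" for i
    using that by (simp add: L_def)
  have "row_tableau k L = T"
  proof
    fix b show "row_tableau k L b = T b"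
      using T nth_L unfolding SVT_def
      by (cases b) (auto simp: row_tableau_def mem_boxes_single_row)
  qed
  moreover have "row_chain n L"
    unfolding row_chain_iff_nth
  proof (rule conjI; intro ballI allI impI)
    fix S assume "S \<in> set L"
    then obtain i where "i < k" "S = T (1, k - i)"
      by (auto simp: L_def)
    with T show "S \<noteq> {} \<and> S \<subseteq> {1..n}"
      unfolding SVT_def by (auto simp: mem_boxes_single_row)
  next
    fix i assume i: "Suc i < length L"
    then have "(1, k - Suc i) \<in> boxes [k]" "(1, k - Suc i + 1) \<in> boxes [k]"
      and "k - Suc i + 1 = k - i"
      by (auto simp: L_def mem_boxes_single_row)
    with T have "Max (T (1, k - Suc i)) \<le> Min (T (1, k - i))"
      unfolding SVT_def by fastforce
    with i show "Max (L ! Suc i) \<le> Min (L ! i)"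
      by (simp add: L_def)
  qed
  ultimately show "T \<in> row_tableau k ` row_chains k n"
    by (intro image_eqI[of _ _ L]) (simp_all add: row_chains_def L_def)
qed (use row_tableau_in_SVT in blast)

lemma inj_on_row_tableau: "inj_on (row_tableau k) (row_chains k n)"
proof (rule inj_onI)
  fix L L' assume "L \<in> row_chains k n" "L' \<in> row_chains k n"
    and eq: "row_tableau k L = row_tableau k L'"
  then have len: "length L = k" "length L' = k" by (auto simp: row_chains_def)
  show "L = L'"
  proof (rule nth_equalityI)
    fix i assume "i < length L"
    then have "k - (k - i) = i" "1 \<le> k - i"
      using len by auto
    with fun_cong[OF eq, of "(1, k - i)"] show "L ! i = L' ! i"
      by (simp add: row_tableau_def)
  qed (simp add: len)
qed

lemma tsize_row_tableau:
  assumes "length L = k"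
  shows "tsize [k] (row_tableau k L) = row_size L"
proof -
  have "boxes [k] = (\<lambda>j. (1, j)) ` {1..k}"
    by (auto simp: boxes_def)
  then have "tsize [k] (row_tableau k L) = (\<Sum>j = 1..k. card (L ! (k - j)))"
    unfolding tsize_def by (simp add: sum.reindex inj_on_def row_tableau_def)
  also have "\<dots> = (\<Sum>i<k. card (L ! i))"
    by (rule sum.reindex_bij_witness[where i = "\<lambda>i. k - i" and j = "\<lambda>j. k - j"]) auto
  also have "\<dots> = row_size L"
    using assms by (simp add: row_size_def sum_list_sum_nth atLeast0LessThan)
  finally show ?thesis .
qed

lemma groth_single_row_ones: "groth [k] n (\<lambda>_. 1) b = row_gen b k n"
proof -
  have "groth [k] n (\<lambda>_. 1) b = (\<Sum>T\<in>row_tableau k ` row_chains k n. b ^ (tsize [k] T - k))"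
    by (simp add: groth_def psize_def SVT_single_row)
  also have "\<dots> = row_gen b k n"
    unfolding row_gen_def
    by (rule sum.reindex_cong[OF inj_on_row_tableau refl]) (simp add: tsize_row_tableau row_chains_def)
  finally show ?thesis .
qed

subsection \<open>A Pascal-type recursion\<close>

definition add_top :: "nat \<Rightarrow> nat set list \<Rightarrow> nat set list" where
  "add_top n L = insert (Suc n) (hd L) # tl L"

lemma Min_insert_above:
  fixes A :: "'a::linorder set"
  assumes "finite A" "A \<noteq> {}" "\<forall>a\<in>A. a \<le> x"
  shows "Min (insert x A) = Min A"
  using assms Min_in[OF assms(1,2)] by (simp add: min_absorb2)

lemma row_chains_head_top:
  "{X \<in> row_chains (Suc k) (Suc n). hd X = {Suc n}} = (#) {Suc n} ` row_chains k (Suc n)"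
proof (intro equalityI subsetI)
  fix X assume "X \<in> {X \<in> row_chains (Suc k) (Suc n). hd X = {Suc n}}"
  then show "X \<in> (#) {Suc n} ` row_chains k (Suc n)"
    by (cases X) (auto simp: row_chains_def)
next
  fix X assume "X \<in> (#) {Suc n} ` row_chains k (Suc n)"
  then obtain L where X: "X = {Suc n} # L" and L: "length L = k" "row_chain (Suc n) L"
    by (auto simp: row_chains_def)
  have "Max (hd L) \<le> Suc n" if "L \<noteq> []"
    using that row_chain_entry[OF L(2), of "hd L"] finite_subset[of "hd L" "{1..Suc n}"] by auto
  with X L show "X \<in> {X \<in> row_chains (Suc k) (Suc n). hd X = {Suc n}}"
    by (auto simp: row_chains_def)
qed

lemma row_chains_head_below_top:
  "{X \<in> row_chains (Suc k) (Suc n). Suc n \<notin> hd X} = row_chains (Suc k) n"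
proof (intro equalityI subsetI)
  fix X assume X: "X \<in> {X \<in> row_chains (Suc k) (Suc n). Suc n \<notin> hd X}"
  then obtain S L where SL: "X = S # L" "length L = k" "row_chain (Suc n) (S # L)"
    by (cases X) (auto simp: row_chains_def)
  with X have "S \<subseteq> {1..n}" by (auto simp: le_Suc_eq)
  with SL show "X \<in> row_chains (Suc k) n"
    using row_chain_restrict[OF SL(3)] by (simp add: row_chains_def)
next
  fix X assume X: "X \<in> row_chains (Suc k) n"
  then obtain S L where "X = S # L" "S \<subseteq> {1..n}" by (cases X) (auto simp: row_chains_def)
  with X show "X \<in> {X \<in> row_chains (Suc k) (Suc n). Suc n \<notin> hd X}"
    using row_chain_mono by (auto simp: row_chains_def)
qed

lemma row_chains_head_with_top:
  "{X \<in> row_chains (Suc k) (Suc n). Suc n \<in> hd X \<and> hd X \<noteq> {Suc n}} =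
   add_top n ` row_chains (Suc k) n"
proof (intro equalityI subsetI)
  fix X assume X: "X \<in> {X \<in> row_chains (Suc k) (Suc n). Suc n \<in> hd X \<and> hd X \<noteq> {Suc n}}"
  then obtain S L where SL: "X = S # L" "length L = k" "row_chain (Suc n) (S # L)"
    by (cases X) (auto simp: row_chains_def)
  define R where "R = S - {Suc n}"
  have R: "R \<noteq> {}" "R \<subseteq> {1..n}" "S = insert (Suc n) R"
    using X SL by (auto simp: R_def row_chains_def le_Suc_eq)
  moreover have "finite R" "\<forall>a\<in>R. a \<le> Suc n"
    using R(2) finite_subset by auto
  ultimately have "Min S = Min R"
    using Min_insert_above[of R "Suc n"] by simp
  with SL R have "row_chain (Suc n) (R # L)" by auto
  then have "R # L \<in> row_chains (Suc k) n"
    using row_chain_restrict R(2) SL(2) by (auto simp: row_chains_def)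
  moreover have "X = add_top n (R # L)"
    using SL R by (simp add: add_top_def)
  ultimately show "X \<in> add_top n ` row_chains (Suc k) n" by blast
next
  fix X assume "X \<in> add_top n ` row_chains (Suc k) n"
  then obtain R L where X: "X = insert (Suc n) R # L" and RL: "length L = k" "row_chain n (R # L)"
    by (auto simp: row_chains_def add_top_def length_Suc_conv)
  then have R: "R \<noteq> {}" "R \<subseteq> {1..n}" by auto
  moreover have "finite R" "\<forall>a\<in>R. a \<le> Suc n"
    using R(2) finite_subset by auto
  ultimately have "Min (insert (Suc n) R) = Min R"
    using Min_insert_above[of R "Suc n"] by simp
  with X RL R show "X \<in> {X \<in> row_chains (Suc k) (Suc n). Suc n \<in> hd X \<and> hd X \<noteq> {Suc n}}"
    using row_chain_mono[of n L "Suc n"] by (auto simp: row_chains_def)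
qed

lemma inj_on_add_top: "inj_on (add_top n) (row_chains k n)"
proof (rule inj_onI)
  fix X Y assume X: "X \<in> row_chains k n" and Y: "Y \<in> row_chains k n"
    and eq: "add_top n X = add_top n Y"
  show "X = Y"
  proof (cases "X = [] \<or> Y = []")
    case False
    then obtain S L S' L' where XY: "X = S # L" "Y = S' # L'" by (meson neq_Nil_conv)
    with X Y have "Suc n \<notin> S" "Suc n \<notin> S'" by (auto simp: row_chains_def)
    with eq XY show ?thesis by (simp add: add_top_def insert_ident)
  qed (use X Y in \<open>auto simp: row_chains_def\<close>)
qed

lemma row_size_add_top:
  assumes "X \<in> row_chains (Suc k) n"
  shows "row_size (add_top n X) = Suc (row_size X)"
proof -
  obtain S L where "X = S # L" "S \<subseteq> {1..n}"
    using assms by (cases X) (auto simp: row_chains_def)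
  moreover have "finite S" "Suc n \<notin> S"
    using \<open>S \<subseteq> {1..n}\<close> finite_subset by auto
  ultimately show ?thesis by (simp add: add_top_def row_size_def)
qed

lemma row_gen_Suc_Suc:
  "row_gen b (Suc k) (Suc n) = row_gen b k (Suc n) + (1 + b) * row_gen b (Suc k) n"
proof -
  let ?R = "row_chains (Suc k) (Suc n)" and ?f = "\<lambda>L. b ^ (row_size L - Suc k)"
  define A B C where "A = {X \<in> ?R. hd X = {Suc n}}" and "B = {X \<in> ?R. Suc n \<notin> hd X}"
    and "C = {X \<in> ?R. Suc n \<in> hd X \<and> hd X \<noteq> {Suc n}}"
  have "finite A" "finite B" "finite C"
    using finite_row_chains by (auto simp: A_def B_def C_def)
  moreover have "?R = A \<union> B \<union> C" "A \<inter> B = {}" "(A \<union> B) \<inter> C = {}"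
    by (auto simp: A_def B_def C_def)
  ultimately have "row_gen b (Suc k) (Suc n) = sum ?f A + sum ?f B + sum ?f C"
    unfolding row_gen_def by (simp add: sum.union_disjoint)
  also have "sum ?f A = row_gen b k (Suc n)"
    unfolding row_gen_def A_def row_chains_head_top
    by (rule sum.reindex_cong[of "(#) {Suc n}"]) (auto simp: row_size_def)
  also have "sum ?f B = row_gen b (Suc k) n"
    unfolding row_gen_def B_def row_chains_head_below_top ..
  also have "sum ?f C = b * row_gen b (Suc k) n"
    unfolding row_gen_def C_def row_chains_head_with_top sum_distrib_left
  proof (rule sum.reindex_cong[OF inj_on_add_top refl])
    fix X assume X: "X \<in> row_chains (Suc k) n"
    then have "Suc k \<le> row_size X"
      using length_le_row_size[of n X] by (simp add: row_chains_def)
    then have "row_size (add_top n X) - Suc k = Suc (row_size X - Suc k)"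
      by (simp add: row_size_add_top[OF X])
    then show "?f (add_top n X) = b * b ^ (row_size X - Suc k)"
      by simp
  qed
  finally show ?thesis by (simp add: algebra_simps)
qed

lemma row_gen_0_left: "row_gen b 0 n = 1"
proof -
  have "row_chains 0 n = {[]}" by (auto simp: row_chains_def)
  then show ?thesis by (simp add: row_gen_def row_size_def)
qed

lemma row_gen_Suc_0: "row_gen b (Suc k) 0 = 0"
proof -
  have "row_chains (Suc k) 0 = {}" by (auto simp: row_chains_def length_Suc_conv)
  then show ?thesis by (simp add: row_gen_def)
qed

subsection \<open>The closed form\<close>

text \<open>\<open>row_coeff k n m\<close> is the number of one-row tableaux with \<open>k\<close> boxes, entries in \<open>[n]\<close>
  and \<open>k + m\<close> entries in total.\<close>

definition row_coeff :: "nat \<Rightarrow> nat \<Rightarrow> nat \<Rightarrow> nat" where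
  "row_coeff k n m = ((n + k - 1) choose (k + m)) * ((k + m - 1) choose m)"

definition row_poly :: "'a::comm_semiring_1 \<Rightarrow> nat \<Rightarrow> nat \<Rightarrow> 'a" where
  "row_poly b k n = (\<Sum>m\<le>n. of_nat (row_coeff k n m) * b ^ m)"

lemma row_coeff_Suc_Suc:
  "row_coeff (Suc k) (Suc n) m = row_coeff k (Suc n) m + row_coeff (Suc k) n m +
     (case m of 0 \<Rightarrow> 0 | Suc m' \<Rightarrow> row_coeff (Suc k) n m')"
  by (cases m) (simp_all add: row_coeff_def algebra_simps)

lemma row_poly_0_left: "row_poly b 0 n = 1"
proof -
  have "row_poly b 0 n = of_nat (row_coeff 0 n 0) + (\<Sum>m<n. of_nat (row_coeff 0 n (Suc m)) * b ^ Suc m)"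
    unfolding row_poly_def by (simp add: sum.atMost_shift)
  then show ?thesis by (simp add: row_coeff_def binomial_eq_0)
qed

lemma row_poly_Suc_0: "row_poly b (Suc k) 0 = 0"
  by (simp add: row_poly_def row_coeff_def binomial_eq_0)

lemma row_poly_Suc_Suc:
  "row_poly b (Suc k) (Suc n) = row_poly b k (Suc n) + (1 + b) * row_poly b (Suc k) n"
proof -
  define c where "c m = (case m of 0 \<Rightarrow> 0 | Suc m' \<Rightarrow> row_coeff (Suc k) n m')" for m
  have extend: "row_poly b (Suc k) n = (\<Sum>m\<le>Suc n. of_nat (row_coeff (Suc k) n m) * b ^ m)"
    by (simp add: row_poly_def row_coeff_def binomial_eq_0)
  have shift: "b * row_poly b (Suc k) n = (\<Sum>m\<le>Suc n. of_nat (c m) * b ^ m)"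
    unfolding sum.atMost_Suc_shift by (simp add: row_poly_def c_def sum_distrib_left algebra_simps)
  have "row_poly b (Suc k) (Suc n) =
        (\<Sum>m\<le>Suc n. (of_nat (row_coeff k (Suc n) m) + of_nat (row_coeff (Suc k) n m)
                      + of_nat (c m)) * b ^ m)"
    unfolding row_poly_def by (rule sum.cong) (simp_all add: row_coeff_Suc_Suc c_def)
  also have "\<dots> = row_poly b k (Suc n) + row_poly b (Suc k) n + b * row_poly b (Suc k) n"
    by (simp only: distrib_right sum.distrib shift[symmetric] extend[symmetric]
        row_poly_def[of b k "Suc n", symmetric])
  finally show ?thesis by (simp add: algebra_simps)
qed

lemma row_gen_eq_row_poly: "row_gen b k n = row_poly b k n"
proof (induction n arbitrary: k)
  case 0
  then show ?case
    by (cases k) (simp_all add: row_gen_0_left row_poly_0_left row_gen_Suc_0 row_poly_Suc_0)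
next
  case (Suc n)
  then show ?case
    by (induction k) (simp_all add: row_gen_0_left row_poly_0_left row_gen_Suc_Suc row_poly_Suc_Suc)
qed

subsection \<open>The terminating hypergeometric series\<close>

lemma hyp2F1_terminating:
  "hyp2F1 a (- of_nat N) c z =
     (\<Sum>m\<le>N. pochhammer a m * pochhammer (- of_nat N) m / pochhammer c m * z ^ m / fact m)"
  unfolding hyp2F1_def of_nat_fact
  by (rule suminf_finite) (auto simp: pochhammer_of_nat_eq_0_iff)

lemma pochhammer_minus_of_nat:
  "pochhammer (- of_nat N :: 'a::field_char_0) m = (-1) ^ m * fact m * of_nat (N choose m)"
  by (simp add: binomial_gbinomial gbinomial_pochhammer flip: power_mult_distrib)

lemma pochhammer_div_pochhammer_plus_1:
  fixes a :: "'a::field"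
  assumes "pochhammer (a + 1) m \<noteq> 0" "a + of_nat m \<noteq> 0"
  shows "pochhammer a m / pochhammer (a + 1) m = a / (a + of_nat m)"
  using pochhammer_rec[of a m] pochhammer_rec'[of a m] assms
  by (simp add: field_simps)

lemma hyp2F1_k_k_plus_1:
  assumes "k \<ge> 1"
  shows "hyp2F1 (of_nat k) (- of_nat N) (of_nat k + 1) z =
     (\<Sum>m\<le>N. of_nat k / of_nat (k + m) * of_nat (N choose m) * (- z) ^ m)"
proof -
  have poch_nz: "pochhammer (of_nat k + 1 :: complex) m \<noteq> 0" for m
  proof -
    have "(of_nat k + 1 :: complex) = of_nat (Suc k)" by simp
    then show ?thesis by (simp add: pochhammer_of_nat pochhammer_pos del: of_nat_Suc)
  qed
  have sum_nz: "(of_nat k + of_nat m :: complex) \<noteq> 0" for m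
    using assms of_nat_neq_0[of "k - 1 + m", where 'a=complex] by simp
  have ratio: "pochhammer (of_nat k) m / pochhammer (of_nat k + 1) m =
                    of_nat k / (of_nat (k + m) :: complex)" for m
    using pochhammer_div_pochhammer_plus_1[OF poch_nz sum_nz] by simp
  show ?thesis
    unfolding hyp2F1_terminating
  proof (intro sum.cong refl)
    fix m
    have "pochhammer (of_nat k) m * pochhammer (- of_nat N) m / pochhammer (of_nat k + 1) m *
            z ^ m / fact m =
          pochhammer (of_nat k) m / pochhammer (of_nat k + 1) m * of_nat (N choose m) *
            ((- 1) ^ m * z ^ m)"
      by (simp add: pochhammer_minus_of_nat)
    then show "pochhammer (of_nat k) m * pochhammer (- of_nat N) m / pochhammer (of_nat k + 1) m *
            z ^ m / fact m = of_nat k / of_nat (k + m) * of_nat (N choose m) * (- z) ^ m"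
      by (simp only: ratio power_minus[of z])
  qed
qed

lemma choose_mult_absorption:
  "k * ((N + k) choose k) * (N choose m) =
   (k + m) * ((N + k) choose (k + m)) * ((k + m - 1) choose m)"
proof (cases "m \<le> N")
  case True
  have "((N + k) choose (k + m)) * ((k + m) choose k) = ((N + k) choose k) * (N choose m)"
    using choose_mult[of k "k + m" "N + k"] True by simp
  moreover have "k * ((k + m) choose k) = (k + m) * ((k + m - 1) choose m)"
  proof (cases k)
    case (Suc K)
    then show ?thesis
      using Suc_times_binomial[of K "K + m"] binomial_symmetric[of K "K + m"] by simp
  qed (cases m, simp_all)
  ultimately show ?thesis by (metis mult.assoc mult.left_commute)
qed (simp add: binomial_eq_0)

lemma binomial_times_hyp2F1_eq_row_poly:
  assumes "k \<ge> 1"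
  shows "of_nat ((N + k) choose k) * hyp2F1 (of_nat k) (- of_nat N) (of_nat k + 1) (- b) =
         row_poly b k (Suc N)"
proof -
  have "row_poly b k (Suc N) = (\<Sum>m\<le>N. of_nat (row_coeff k (Suc N) m) * b ^ m)"
    by (simp add: row_poly_def row_coeff_def binomial_eq_0)
  also have "\<dots> = (\<Sum>m\<le>N. of_nat ((N + k) choose k) *
                          (of_nat k / of_nat (k + m) * of_nat (N choose m) * b ^ m))"
  proof (intro sum.cong refl)
    fix m
    have nz: "(of_nat (k + m) :: complex) \<noteq> 0"
      using assms of_nat_neq_0[of "k - 1 + m", where 'a=complex] by simp
    have "of_nat ((N + k) choose k) * (of_nat k / of_nat (k + m) * of_nat (N choose m) * b ^ m) =
          of_nat (k * ((N + k) choose k) * (N choose m)) / of_nat (k + m) * b ^ m"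
      by (simp add: field_simps)
    also have "\<dots> = of_nat ((k + m) * row_coeff k (Suc N) m) / of_nat (k + m) * b ^ m"
      unfolding choose_mult_absorption by (simp add: row_coeff_def mult.assoc)
    also have "\<dots> = of_nat (row_coeff k (Suc N) m) * b ^ m"
      unfolding of_nat_mult[of "k + m"] nonzero_mult_div_cancel_left[OF nz] ..
    finally show "of_nat (row_coeff k (Suc N) m) * b ^ m =
        of_nat ((N + k) choose k) * (of_nat k / of_nat (k + m) * of_nat (N choose m) * b ^ m)"
      by (rule sym)
  qed
  finally show ?thesis
    by (simp add: hyp2F1_k_k_plus_1[OF assms] sum_distrib_left)
qed

theorem proposition3p1:
  fixes n k :: nat and beta :: complex
  assumes "n \<ge> 1" and "k \<ge> 1"
  shows "groth [k] n (\<lambda>_. 1) beta =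
         of_nat ((n + k - 1) choose k) *
         hyp2F1 (of_nat k) (1 - of_nat n) (of_nat k + 1) (- beta)"
proof -
  obtain N where n: "n = Suc N"
    using assms(1) by (cases n) auto
  have "groth [k] n (\<lambda>_. 1) beta = row_poly beta k (Suc N)"
    unfolding groth_single_row_ones row_gen_eq_row_poly n ..
  also have "\<dots> = of_nat ((N + k) choose k) *
                  hyp2F1 (of_nat k) (- of_nat N) (of_nat k + 1) (- beta)"
    using binomial_times_hyp2F1_eq_row_poly[OF assms(2)] by simp
  finally show ?thesis
    by (simp add: n)
qed

end
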